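(* Let $X$ be a uniform space equipped with a uniformly continuous and expansive action of a group $\Gamma$, and let $f \colon X \to X$ be a uniformly continuous and $\Gamma$-equivariant map. Let $Y$ be a subset of $X$ such that $Y$ and $f(Y)$ are both closed in $X$ and the restriction of $f$ to $Y$ is a uniform embedding. Suppose that there exists a net $(Z_i)_{i \in I}$ of $\Gamma$-invariant subsets of $X$ such that, for all $i \in I$, $f(Z_i) \subset Z_i$ and the restriction map $f\vert_{Z_i} \colon Z_i \to Z_i$ is surjunctive, and such that $(Z_i)$ converges to $Y$ in the Hausdorff-Bourbaki topology. Then $Y$ is $\Gamma$-invariant and $f(Y) = Y$.
   Context: A map $g \colon S \to S$ is surjunctive if it is surjective or not injective. For $V \subset X \times X$ and $A \subset X$, $V[A] = \{x \in X : (x,a) \in V \text{ for some } a \in A\}$. An action of $\Gamma$ on $X$ is uniformly continuous if each map $x \mapsto \gamma x$ is uniformly continuous; it is expansive if there is an entourage $W_0$ of $X$ such that for any two distinct $x,y \in X$ there is $\gamma \in \Gamma$ with $(\gamma x,\gamma y) \notin W_0$. A uniform embedding is an injective map inducing a uniform isomorphism onto its image. The Hausdorff-Bourbaki uniform structure on the set $\mathcal{P}(X)$ of all subsets of $X$ has as a base the sets $\widehat{V} = \{(A,B) : B \subset V[A] \text{ and } A \subset V[B]\}$, $V$ an entourage of $X$; the Hausdorff-Bourbaki topology is its associated topology. *)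

theory Defs
  imports "HOL-Analysis.Analysis" "HOL-Algebra.Group"
begin

definition entourage :: "('a::uniform_space \<times> 'a) set \<Rightarrow> bool" where
  "entourage V \<longleftrightarrow> eventually (\<lambda>p. p \<in> V) uniformity"

definition rel_image :: "('a \<times> 'a) set \<Rightarrow> 'a set \<Rightarrow> 'a set" where
  "rel_image V A = {x. \<exists>a\<in>A. (x, a) \<in> V}"

definition hb_entourage :: "('a \<times> 'a) set \<Rightarrow> ('a set \<times> 'a set) set" where
  "hb_entourage V = {(A, B). B \<subseteq> rel_image V A \<and> A \<subseteq> rel_image V B}"

definition surjunctive :: "('a \<Rightarrow> 'a) \<Rightarrow> 'a set \<Rightarrow> bool" where
  "surjunctive g S \<longleftrightarrow> g ` S = S \<or> \<not> inj_on g S"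

definition group_action :: "('g, 'b) monoid_scheme \<Rightarrow> ('g \<Rightarrow> 'a \<Rightarrow> 'a) \<Rightarrow> bool" where
  "group_action G act \<longleftrightarrow> group G \<and> (\<forall>x. act \<one>\<^bsub>G\<^esub> x = x) \<and>
     (\<forall>g\<in>carrier G. \<forall>h\<in>carrier G. \<forall>x. act (g \<otimes>\<^bsub>G\<^esub> h) x = act g (act h x))"

definition expansive_action :: "('g, 'b) monoid_scheme \<Rightarrow> ('g \<Rightarrow> 'a::uniform_space \<Rightarrow> 'a) \<Rightarrow> bool" where
  "expansive_action G act \<longleftrightarrow> (\<exists>W0. entourage W0 \<and>
     (\<forall>x y. x \<noteq> y \<longrightarrow> (\<exists>g\<in>carrier G. (act g x, act g y) \<notin> W0)))"

definition invariant_set :: "('g, 'b) monoid_scheme \<Rightarrow> ('g \<Rightarrow> 'a \<Rightarrow> 'a) \<Rightarrow> 'a set \<Rightarrow> bool" where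
  "invariant_set G act Z \<longleftrightarrow> (\<forall>g\<in>carrier G. \<forall>z\<in>Z. act g z \<in> Z)"

definition uniform_embedding_on :: "'a::uniform_space set \<Rightarrow> ('a \<Rightarrow> 'b::uniform_space) \<Rightarrow> bool" where
  "uniform_embedding_on Y f \<longleftrightarrow> inj_on f Y \<and> uniformly_continuous_on Y f \<and>
     uniformly_continuous_on (f ` Y) (inv_into Y f)"

definition directed_set :: "'i set \<Rightarrow> ('i \<Rightarrow> 'i \<Rightarrow> bool) \<Rightarrow> bool" where
  "directed_set I leq \<longleftrightarrow> I \<noteq> {} \<and> (\<forall>i\<in>I. leq i i) \<and>
     (\<forall>i\<in>I. \<forall>j\<in>I. \<forall>k\<in>I. leq i j \<longrightarrow> leq j k \<longrightarrow> leq i k) \<and>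
     (\<forall>i\<in>I. \<forall>j\<in>I. \<exists>k\<in>I. leq i k \<and> leq j k)"

definition hb_converges :: "'i set \<Rightarrow> ('i \<Rightarrow> 'i \<Rightarrow> bool) \<Rightarrow> ('i \<Rightarrow> 'a::uniform_space set) \<Rightarrow> 'a set \<Rightarrow> bool" where
  "hb_converges I leq Z Y \<longleftrightarrow> (\<forall>V. entourage V \<longrightarrow>
     (\<exists>i0\<in>I. \<forall>i\<in>I. leq i0 i \<longrightarrow> (Y, Z i) \<in> hb_entourage V))"

end

theory Submission imports Defs begin

text \<open>A uniformly continuous map preserving sets arbitrarily close to the closed
  set Y preserves Y, which gives the invariance of Y and f(Y) \<subseteq> Y. Since f is a uniform
  embedding on Y, two points close to Y with the same image are close to each other; by
  expansivity and equivariance, f is therefore injective on every invariant set close enough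
  to Y. Surjunctivity then makes f surjective on the approximating sets Z i, so every point
  of Y is a limit of points of f(Y), and closedness of f(Y) gives Y \<subseteq> f(Y).\<close>

lemma entourage_Int: "entourage U \<Longrightarrow> entourage V \<Longrightarrow> entourage (U \<inter> V)"
  unfolding entourage_def by (auto elim: eventually_elim2)

lemma entourage_converse: "entourage V \<Longrightarrow> entourage (converse V)"
  unfolding entourage_def by (drule uniformity_sym) (auto elim!: eventually_mono)

lemma entourage_compE:
  assumes "entourage V"
  obtains D where "entourage D" "\<And>x y z. (x, y) \<in> D \<Longrightarrow> (y, z) \<in> D \<Longrightarrow> (x, z) \<in> V"
proof -
  from uniformity_trans[OF assms[unfolded entourage_def]] obtain D where
    "eventually D uniformity" "\<forall>x y z. D (x, y) \<longrightarrow> D (y, z) \<longrightarrow> (x, z) \<in> V"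
    by blast
  then show ?thesis by (intro that[of "Collect D"]) (auto simp: entourage_def)
qed

lemma uniformly_continuous_on_entourageE:
  assumes "uniformly_continuous_on S f" "entourage V"
  obtains U where "entourage U"
    "\<And>x y. x \<in> S \<Longrightarrow> y \<in> S \<Longrightarrow> (x, y) \<in> U \<Longrightarrow> (f x, f y) \<in> V"
proof -
  have "eventually (\<lambda>(x, y). x \<in> S \<longrightarrow> y \<in> S \<longrightarrow> (f x, f y) \<in> V) uniformity"
    using uniformly_continuous_onD[OF assms(1), of "\<lambda>p. p \<in> V"] assms(2)
    by (simp add: entourage_def)
  then show ?thesis
    by (intro that[of "{(x, y). x \<in> S \<longrightarrow> y \<in> S \<longrightarrow> (f x, f y) \<in> V}"])
      (auto simp: entourage_def case_prod_unfold)
qed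

lemma closed_entourage_memI:
  assumes "closed S" "\<And>W. entourage W \<Longrightarrow> \<exists>y\<in>S. (x, y) \<in> W"
  shows "x \<in> S"
proof (rule ccontr)
  assume "x \<notin> S"
  then have "eventually (\<lambda>(x', y). x' = x \<longrightarrow> y \<in> - S) uniformity"
    using \<open>closed S\<close> by (simp add: open_uniformity closed_def)
  then have "entourage {(x', y). x' = x \<longrightarrow> y \<in> - S}"
    by (simp add: entourage_def case_prod_unfold)
  with assms(2) show False by fastforce
qed

lemma hb_entourage_mono: "V \<subseteq> V' \<Longrightarrow> hb_entourage V \<subseteq> hb_entourage V'"
  unfolding hb_entourage_def rel_image_def by blast

lemma hb_converges_ex:
  assumes "hb_converges I leq Z Y" "directed_set I leq" "entourage V"
  shows "\<exists>i\<in>I. (Y, Z i) \<in> hb_entourage V"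
proof -
  obtain i0 where "i0 \<in> I" "\<forall>i\<in>I. leq i0 i \<longrightarrow> (Y, Z i) \<in> hb_entourage V"
    using assms(1,3) unfolding hb_converges_def by blast
  moreover have "leq i0 i0" using assms(2) \<open>i0 \<in> I\<close> unfolding directed_set_def by blast
  ultimately show ?thesis by blast
qed

lemma closed_image_subset_if_hb_approx:
  fixes h :: "'a::uniform_space \<Rightarrow> 'a"
  assumes h: "uniformly_continuous_on UNIV h" and "closed Y"
    and approx: "\<And>V. entourage V \<Longrightarrow> \<exists>Z. (Y, Z) \<in> hb_entourage V \<and> h ` Z \<subseteq> Z"
  shows "h ` Y \<subseteq> Y"
proof clarify
  fix y assume "y \<in> Y"
  show "h y \<in> Y"
  proof (rule closed_entourage_memI[OF \<open>closed Y\<close>])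
    fix W :: "('a \<times> 'a) set" assume "entourage W"
    then obtain D where D: "entourage D" "\<And>x y z. (x, y) \<in> D \<Longrightarrow> (y, z) \<in> D \<Longrightarrow> (x, z) \<in> W"
      using entourage_compE by blast
    obtain U where U: "entourage U" "\<And>x y. (x, y) \<in> U \<Longrightarrow> (h x, h y) \<in> D"
      using uniformly_continuous_on_entourageE[OF h D(1)] by auto
    obtain Z where Z: "(Y, Z) \<in> hb_entourage (U \<inter> D)" "h ` Z \<subseteq> Z"
      using approx[OF entourage_Int[OF U(1) D(1)]] by blast
    obtain z where "z \<in> Z" "(y, z) \<in> U"
      using Z(1) \<open>y \<in> Y\<close> unfolding hb_entourage_def rel_image_def by blast
    obtain y' where "y' \<in> Y" "(h z, y') \<in> D"
      using Z \<open>z \<in> Z\<close> unfolding hb_entourage_def rel_image_def by blast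
    have "(h y, h z) \<in> D" using U(2) \<open>(y, z) \<in> U\<close> .
    from this \<open>(h z, y') \<in> D\<close> have "(h y, y') \<in> W" by (rule D(2))
    with \<open>y' \<in> Y\<close> show "\<exists>y'\<in>Y. (h y, y') \<in> W" by blast
  qed
qed

lemma closed_image_supset_if_hb_approx:
  fixes f :: "'a::uniform_space \<Rightarrow> 'a"
  assumes f: "uniformly_continuous_on UNIV f" and "closed (f ` Y)"
    and approx: "\<And>V. entourage V \<Longrightarrow> \<exists>Z. (Y, Z) \<in> hb_entourage V \<and> Z \<subseteq> f ` Z"
  shows "Y \<subseteq> f ` Y"
proof
  fix y assume "y \<in> Y"
  show "y \<in> f ` Y"
  proof (rule closed_entourage_memI[OF \<open>closed (f ` Y)\<close>])
    fix W :: "('a \<times> 'a) set" assume "entourage W"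
    then obtain D where D: "entourage D" "\<And>x y z. (x, y) \<in> D \<Longrightarrow> (y, z) \<in> D \<Longrightarrow> (x, z) \<in> W"
      using entourage_compE by blast
    obtain U where U: "entourage U" "\<And>x y. (x, y) \<in> U \<Longrightarrow> (f x, f y) \<in> D"
      using uniformly_continuous_on_entourageE[OF f D(1)] by auto
    obtain Z where Z: "(Y, Z) \<in> hb_entourage (U \<inter> D)" "Z \<subseteq> f ` Z"
      using approx[OF entourage_Int[OF U(1) D(1)]] by blast
    obtain z' where "z' \<in> Z" "(y, f z') \<in> D"
      using Z \<open>y \<in> Y\<close> unfolding hb_entourage_def rel_image_def by blast
    obtain y' where "y' \<in> Y" "(z', y') \<in> U"
      using Z(1) \<open>z' \<in> Z\<close> unfolding hb_entourage_def rel_image_def by blast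
    have "(f z', f y') \<in> D" using U(2) \<open>(z', y') \<in> U\<close> .
    with \<open>(y, f z') \<in> D\<close> have "(y, f y') \<in> W" by (rule D(2))
    with \<open>y' \<in> Y\<close> show "\<exists>x\<in>f ` Y. (y, x) \<in> W" by blast
  qed
qed

lemma uniform_embedding_on_near_injective:
  fixes f :: "'a::uniform_space \<Rightarrow> 'a"
  assumes f: "uniformly_continuous_on UNIV f" and emb: "uniform_embedding_on Y f"
    and "entourage W"
  obtains V where "entourage V"
    "\<And>x x'. x \<in> rel_image V Y \<Longrightarrow> x' \<in> rel_image V Y \<Longrightarrow> f x = f x' \<Longrightarrow> (x, x') \<in> W"
proof -
  have inj: "inj_on f Y" and inv_uc: "uniformly_continuous_on (f ` Y) (inv_into Y f)"
    using emb by (auto simp: uniform_embedding_on_def)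
  obtain C where C: "entourage C" "\<And>x y z. (x, y) \<in> C \<Longrightarrow> (y, z) \<in> C \<Longrightarrow> (x, z) \<in> W"
    using entourage_compE[OF \<open>entourage W\<close>] by blast
  obtain C' where C': "entourage C'" "\<And>x y z. (x, y) \<in> C' \<Longrightarrow> (y, z) \<in> C' \<Longrightarrow> (x, z) \<in> C"
    using entourage_compE[OF C(1)] by blast
  obtain E where E: "entourage E"
    "\<And>y y'. y \<in> Y \<Longrightarrow> y' \<in> Y \<Longrightarrow> (f y, f y') \<in> E \<Longrightarrow> (y, y') \<in> C'"
    using uniformly_continuous_on_entourageE[OF inv_uc C'(1)] inj by (metis imageI inv_into_f_f)
  obtain E' where E': "entourage E'" "\<And>x y z. (x, y) \<in> E' \<Longrightarrow> (y, z) \<in> E' \<Longrightarrow> (x, z) \<in> E"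
    using entourage_compE[OF E(1)] by blast
  obtain U where U: "entourage U" "\<And>x y. (x, y) \<in> U \<Longrightarrow> (f x, f y) \<in> E' \<inter> converse E'"
    using uniformly_continuous_on_entourageE[OF f entourage_Int[OF E'(1) entourage_converse[OF E'(1)]]]
    by auto
  show ?thesis
  proof (rule that[of "U \<inter> C' \<inter> converse C"])
    show "entourage (U \<inter> C' \<inter> converse C)"
      by (intro entourage_Int entourage_converse U(1) C'(1) C(1))
    fix x x' assume "x \<in> rel_image (U \<inter> C' \<inter> converse C) Y" "x' \<in> rel_image (U \<inter> C' \<inter> converse C) Y"
      and "f x = f x'"
    then obtain y y' where y: "y \<in> Y" "(x, y) \<in> U" "(x, y) \<in> C'"
      and y': "y' \<in> Y" "(x', y') \<in> U" "(y', x') \<in> C"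
      unfolding rel_image_def by blast
    \<comment> \<open>f y and f y' are both close to the common image f x = f x'\<close>
    have "(f y, f y') \<in> E" using U(2)[OF y(2)] U(2)[OF y'(2)] E'(2) \<open>f x = f x'\<close> by auto
    then have "(y, y') \<in> C'" using E(2) y(1) y'(1) by blast
    then show "(x, x') \<in> W" using C'(2) C(2) y(3) y'(3) by blast
  qed
qed

lemma expansive_inj_on_invariant_near:
  fixes f :: "'a::uniform_space \<Rightarrow> 'a"
  assumes "expansive_action G act"
    and f_equiv: "\<forall>g\<in>carrier G. \<forall>x. f (act g x) = act g (f x)"
    and f: "uniformly_continuous_on UNIV f" and emb: "uniform_embedding_on Y f"
  obtains V where "entourage V"
    "\<And>Z. invariant_set G act Z \<Longrightarrow> Z \<subseteq> rel_image V Y \<Longrightarrow> inj_on f Z"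
proof -
  obtain W0 where W0: "entourage W0" "\<And>x y. x \<noteq> y \<Longrightarrow> \<exists>g\<in>carrier G. (act g x, act g y) \<notin> W0"
    using assms(1) unfolding expansive_action_def by blast
  obtain V where V: "entourage V"
    "\<And>x x'. x \<in> rel_image V Y \<Longrightarrow> x' \<in> rel_image V Y \<Longrightarrow> f x = f x' \<Longrightarrow> (x, x') \<in> W0"
    using uniform_embedding_on_near_injective[OF f emb W0(1)] by blast
  show ?thesis
  proof (rule that[OF V(1)], rule inj_onI, rule ccontr)
    fix Z a b assume Z: "invariant_set G act Z" "Z \<subseteq> rel_image V Y"
      and "a \<in> Z" "b \<in> Z" "f a = f b" "a \<noteq> b"
    then obtain g where g: "g \<in> carrier G" "(act g a, act g b) \<notin> W0" using W0(2) by blast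
    have "act g a \<in> rel_image V Y" "act g b \<in> rel_image V Y"
      using Z g(1) \<open>a \<in> Z\<close> \<open>b \<in> Z\<close> unfolding invariant_set_def by blast+
    moreover have "f (act g a) = f (act g b)" using f_equiv g(1) \<open>f a = f b\<close> by simp
    ultimately show False using V(2) g(2) by blast
  qed
qed

lemma hb_converges_surjective_approx:
  fixes f :: "'a::uniform_space \<Rightarrow> 'a"
  assumes "expansive_action G act"
    and "\<forall>g\<in>carrier G. \<forall>x. f (act g x) = act g (f x)"
    and "uniformly_continuous_on UNIV f" and "uniform_embedding_on Y f"
    and conv: "hb_converges I leq Z Y" and directed: "directed_set I leq"
    and Z_inv: "\<forall>i\<in>I. invariant_set G act (Z i)"
    and Z_surj: "\<forall>i\<in>I. surjunctive f (Z i)"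
    and "entourage V"
  shows "\<exists>i\<in>I. (Y, Z i) \<in> hb_entourage V \<and> f ` Z i = Z i"
proof -
  obtain V0 where V0: "entourage V0"
    "\<And>Z. invariant_set G act Z \<Longrightarrow> Z \<subseteq> rel_image V0 Y \<Longrightarrow> inj_on f Z"
    using expansive_inj_on_invariant_near[OF assms(1-4)] by blast
  obtain i where i: "i \<in> I" "(Y, Z i) \<in> hb_entourage (V \<inter> V0)"
    using hb_converges_ex[OF conv directed entourage_Int[OF \<open>entourage V\<close> V0(1)]] by blast
  then have "(Y, Z i) \<in> hb_entourage V" using hb_entourage_mono[of "V \<inter> V0" V] by blast
  have "Z i \<subseteq> rel_image V0 Y" using i(2) unfolding hb_entourage_def rel_image_def by blast
  then have "inj_on f (Z i)" using V0(2) Z_inv i(1) by blast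
  then have "f ` Z i = Z i" using Z_surj i(1) unfolding surjunctive_def by blast
  with i(1) \<open>(Y, Z i) \<in> hb_entourage V\<close> show ?thesis by blast
qed

theorem corollary4p2:
  fixes G :: "('g, 'b) monoid_scheme"
    and act :: "'g \<Rightarrow> 'a::uniform_space \<Rightarrow> 'a"
    and f :: "'a \<Rightarrow> 'a"
    and Y :: "'a set"
    and I :: "'i set" and leq :: "'i \<Rightarrow> 'i \<Rightarrow> bool" and Z :: "'i \<Rightarrow> 'a set"
  assumes action: "group_action G act"
    and act_uc: "\<forall>g\<in>carrier G. uniformly_continuous_on UNIV (act g)"
    and expansive: "expansive_action G act"
    and f_uc: "uniformly_continuous_on UNIV f"
    and f_equiv: "\<forall>g\<in>carrier G. \<forall>x. f (act g x) = act g (f x)"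
    and Y_closed: "closed Y" and fY_closed: "closed (f ` Y)"
    and f_emb: "uniform_embedding_on Y f"
    and directed: "directed_set I leq"
    and Z_inv: "\<forall>i\<in>I. invariant_set G act (Z i)"
    and Z_maps: "\<forall>i\<in>I. f ` Z i \<subseteq> Z i"
    and Z_surj: "\<forall>i\<in>I. surjunctive f (Z i)"
    and conv: "hb_converges I leq Z Y"
  shows "invariant_set G act Y \<and> f ` Y = Y"
proof -
  have approx: "\<exists>i\<in>I. (Y, Z i) \<in> hb_entourage V" if "entourage V" for V
    using hb_converges_ex[OF conv directed that] .
  have "act g ` Y \<subseteq> Y" if g: "g \<in> carrier G" for g
  proof (rule closed_image_subset_if_hb_approx[OF _ Y_closed])
    show "uniformly_continuous_on UNIV (act g)" using act_uc g by blast
    fix V :: "('a \<times> 'a) set" assume "entourage V"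
    then obtain i where "i \<in> I" "(Y, Z i) \<in> hb_entourage V" using approx by blast
    moreover have "act g ` Z i \<subseteq> Z i"
      using Z_inv g \<open>i \<in> I\<close> unfolding invariant_set_def by blast
    ultimately show "\<exists>Z. (Y, Z) \<in> hb_entourage V \<and> act g ` Z \<subseteq> Z" by blast
  qed
  then have "invariant_set G act Y" unfolding invariant_set_def by blast
  moreover have "f ` Y \<subseteq> Y"
  proof (rule closed_image_subset_if_hb_approx[OF f_uc Y_closed])
    fix V :: "('a \<times> 'a) set" assume "entourage V"
    then obtain i where "i \<in> I" "(Y, Z i) \<in> hb_entourage V" using approx by blast
    with Z_maps show "\<exists>Z. (Y, Z) \<in> hb_entourage V \<and> f ` Z \<subseteq> Z" by blast
  qed
  moreover have "Y \<subseteq> f ` Y"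
  proof (rule closed_image_supset_if_hb_approx[OF f_uc fY_closed])
    fix V :: "('a \<times> 'a) set" assume "entourage V"
    then show "\<exists>Z. (Y, Z) \<in> hb_entourage V \<and> Z \<subseteq> f ` Z"
      using hb_converges_surjective_approx[OF expansive f_equiv f_uc f_emb conv directed Z_inv Z_surj]
      by (metis order_refl)
  qed
  ultimately show ?thesis by blast
qed

end
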